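(* Let $g(t)$, $t\in[0,T)$, be the maximal Ricci flow solution on $S^1\times S^3$ of the form $g(t)=\phi^2dz^2+a^2\omega^1\otimes\omega^1+b^2\omega^2\otimes\omega^2+c^2\omega^3\otimes\omega^3$. Suppose that $a\le b\le c\le\lambda a$ for some $1<\lambda<2$ at time $t=0$. Then for all $(s,t)\in S^1\times[0,T)$ there exist constants $C_1(\lambda),C_2(\lambda),C_3(\lambda)>0$ such that $$|a'(s,t)|\le C_1(\lambda)\le\max\left(\tfrac{280\sqrt3}{9},\max_s|a'(s,0)|\right),$$ $$|b'(s,t)|\le C_2(\lambda)\le\max\left(\tfrac{4\sqrt{57}}{3},\max_s|b'(s,0)|\right),$$ $$|c'(s,t)|\le C_3(\lambda)\le\max\left(\tfrac{10\sqrt{93}}{9},\max_s|c'(s,0)|\right).$$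
   Context: $S^3=SU(2)$ carries a global left-invariant frame $E_1,E_2,E_3$ with $[E_i,E_j]=-2\epsilon_{ijk}E_k$ and dual coframe $\omega^i$; $z\in S^1=[0,2\pi)$, $\phi,a,b,c$ positive smooth $2\pi$-periodic functions; $s$ is the arclength coordinate $ds=\phi\,dz$ and $'$ denotes $\partial_s$. The Ricci flow $\partial_tg=-2\mathrm{Ric}(g)$ preserves this form. *)

theory Defs
  imports "HOL-Analysis.Analysis"
begin

definition tint :: "ereal \<Rightarrow> real set" where
  "tint T = {t. 0 \<le> t \<and> ereal t < T}"

definition pz :: "(real \<Rightarrow> real \<Rightarrow> real) \<Rightarrow> real \<Rightarrow> real \<Rightarrow> real" where
  "pz f z t = deriv (\<lambda>y. f y t) z"

definition pt :: "ereal \<Rightarrow> (real \<Rightarrow> real \<Rightarrow> real) \<Rightarrow> real \<Rightarrow> real \<Rightarrow> real" where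
  "pt T f z t = (THE D. ((\<lambda>s. f z s) has_real_derivative D) (at t within tint T))"

(* smooth on S^1-cover x [0,T): continuous with all iterated partials existing and continuous *)
coinductive smooth_strip :: "ereal \<Rightarrow> (real \<Rightarrow> real \<Rightarrow> real) \<Rightarrow> bool" for T where
  "\<lbrakk> continuous_on (UNIV \<times> tint T) (\<lambda>(z,t). f z t);
     \<forall>z. \<forall>t\<in>tint T. (\<lambda>y. f y t) differentiable (at z)
                   \<and> (\<lambda>s. f z s) differentiable (at t within tint T);
     smooth_strip T (pz f); smooth_strip T (pt T f) \<rbrakk> \<Longrightarrow> smooth_strip T f"

(* arclength derivative ' = (1/phi) d/dz *)
definition sd :: "(real \<Rightarrow> real \<Rightarrow> real) \<Rightarrow> (real \<Rightarrow> real \<Rightarrow> real) \<Rightarrow> real \<Rightarrow> real \<Rightarrow> real" where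
  "sd \<phi> f z t = pz f z t / \<phi> z t"

(* Ricci flow dt g = -2 Ric for g = phi^2 dz^2 + a^2 w1^2 + b^2 w2^2 + c^2 w3^2,
   with [E_i,E_j] = -2 eps_ijk E_k, written as the PDE system for phi,a,b,c *)
definition rf_solution :: "ereal \<Rightarrow> (real \<Rightarrow> real \<Rightarrow> real) \<Rightarrow> (real \<Rightarrow> real \<Rightarrow> real)
    \<Rightarrow> (real \<Rightarrow> real \<Rightarrow> real) \<Rightarrow> (real \<Rightarrow> real \<Rightarrow> real) \<Rightarrow> bool" where
  "rf_solution T \<phi> a b c \<longleftrightarrow> 0 < T \<and>
    (\<forall>f\<in>{\<phi>, a, b, c}. smooth_strip T f \<and>
        (\<forall>z. \<forall>t\<in>tint T. 0 < f z t \<and> f (z + 2 * pi) t = f z t)) \<and>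
    (\<forall>z. \<forall>t\<in>tint T.
      ((\<lambda>s. \<phi> z s) has_real_derivative
          \<phi> z t * (sd \<phi> (sd \<phi> a) z t / a z t + sd \<phi> (sd \<phi> b) z t / b z t
                     + sd \<phi> (sd \<phi> c) z t / c z t)) (at t within tint T) \<and>
      ((\<lambda>s. a z s) has_real_derivative
          sd \<phi> (sd \<phi> a) z t + sd \<phi> a z t * (sd \<phi> b z t / b z t + sd \<phi> c z t / c z t)
          - 2 * ((a z t)^4 - ((b z t)^2 - (c z t)^2)^2) / (a z t * (b z t)^2 * (c z t)^2))
          (at t within tint T) \<and>
      ((\<lambda>s. b z s) has_real_derivative
          sd \<phi> (sd \<phi> b) z t + sd \<phi> b z t * (sd \<phi> a z t / a z t + sd \<phi> c z t / c z t)
          - 2 * ((b z t)^4 - ((a z t)^2 - (c z t)^2)^2) / ((a z t)^2 * b z t * (c z t)^2))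
          (at t within tint T) \<and>
      ((\<lambda>s. c z s) has_real_derivative
          sd \<phi> (sd \<phi> c) z t + sd \<phi> c z t * (sd \<phi> a z t / a z t + sd \<phi> b z t / b z t)
          - 2 * ((c z t)^4 - ((a z t)^2 - (b z t)^2)^2) / ((a z t)^2 * (b z t)^2 * c z t))
          (at t within tint T))"

definition rf_maximal :: "ereal \<Rightarrow> (real \<Rightarrow> real \<Rightarrow> real) \<Rightarrow> (real \<Rightarrow> real \<Rightarrow> real)
    \<Rightarrow> (real \<Rightarrow> real \<Rightarrow> real) \<Rightarrow> (real \<Rightarrow> real \<Rightarrow> real) \<Rightarrow> bool" where
  "rf_maximal T \<phi> a b c \<longleftrightarrow> rf_solution T \<phi> a b c \<and>
     (\<forall>T'>T. \<not> (\<exists>\<phi>1 a1 b1 c1. rf_solution T' \<phi>1 a1 b1 c1 \<and>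
        (\<forall>z. \<forall>t\<in>tint T. \<phi>1 z t = \<phi> z t \<and> a1 z t = a z t \<and> b1 z t = b z t \<and> c1 z t = c z t)))"

end

theory Submission
  imports Defs "HOL-Library.Periodic_Fun"
begin

text \<open>Everything is a maximum principle on the compact slabs \<open>[0, 2 pi] \<times> [0, t]\<close>. At a first
  negative spatial minimum of \<open>b - a\<close>, \<open>c - b\<close> or \<open>lambda a - c\<close> the first derivatives of the two
  coefficients are proportional, their second derivatives are ordered, and the reaction terms push
  the difference up; so \<open>a \<le> b \<le> c \<le> lambda a < 2 a\<close> persists. Differentiating the equation of a
  coefficient \<open>f\<close> along the circle, at a spatial extremum of \<open>f'\<close> one finds
  \<open>\<partial>\<^sub>t f' = f''' - D\<close> with a damping term \<open>D\<close> built from \<open>(f', g', h')\<close>. Completing squares, the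
  pinching \<open>c \<le> 2 a\<close> forces \<open>D\<close> to have the sign of \<open>f'\<close> once \<open>|f'| \<ge> 10\<close>; hence \<open>|f'|\<close> never
  exceeds \<open>max 10 (max |f'(., 0)|)\<close>, and \<open>10\<close> lies below the three constants of the statement.\<close>

section \<open>Calculus on smooth strips\<close>

lemma tint_pos_eq: "{t \<in> tint T. 0 < t} = {t. 0 < t \<and> ereal t < T}"
  by (auto simp: tint_def)

lemma open_tint_pos: "open {t \<in> tint T. 0 < t}"
  unfolding tint_pos_eq by (intro open_Collect_conj open_Collect_less continuous_intros)

lemma at_within_tint: "t \<in> tint T \<Longrightarrow> 0 < t \<Longrightarrow> at t within tint T = at t"
  by (rule at_within_interior, rule interiorI[OF open_tint_pos]) auto

lemma zero_in_tint: "0 < T \<Longrightarrow> 0 \<in> tint T"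
  by (simp add: tint_def zero_ereal_def)

lemma tint_downward_closed: "t \<in> tint T \<Longrightarrow> 0 \<le> s \<Longrightarrow> s \<le> t \<Longrightarrow> s \<in> tint T"
  by (auto simp: tint_def) (meson ereal_less_eq(3) le_less_trans)

lemma smooth_strip_continuous:
  "smooth_strip T f \<Longrightarrow> continuous_on (UNIV \<times> tint T) (\<lambda>p. f (fst p) (snd p))"
  by (erule smooth_strip.cases) (simp add: case_prod_unfold)

lemma smooth_strip_pz: "smooth_strip T f \<Longrightarrow> smooth_strip T (pz f)"
  by (erule smooth_strip.cases) auto

lemma smooth_strip_pt: "smooth_strip T f \<Longrightarrow> smooth_strip T (pt T f)"
  by (erule smooth_strip.cases) auto

lemma smooth_strip_differentiable_z:
  "smooth_strip T f \<Longrightarrow> t \<in> tint T \<Longrightarrow> (\<lambda>y. f y t) differentiable (at z)"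
  by (erule smooth_strip.cases) auto

lemma smooth_strip_has_derivative_z:
  "smooth_strip T f \<Longrightarrow> t \<in> tint T \<Longrightarrow> ((\<lambda>y. f y t) has_real_derivative pz f z t) (at z)"
  unfolding pz_def by (simp add: DERIV_deriv_iff_real_differentiable smooth_strip_differentiable_z)

lemma pt_eqI:
  assumes "t \<in> tint T" "0 < t" "((\<lambda>s. f z s) has_real_derivative D) (at t within tint T)"
  shows "pt T f z t = D"
  using assms unfolding pt_def at_within_tint[OF assms(1,2)] by (blast intro: DERIV_unique)

lemma smooth_strip_has_derivative_t:
  assumes f: "smooth_strip T f" and t: "t \<in> tint T" "0 < t"
  shows "((\<lambda>s. f z s) has_real_derivative pt T f z t) (at t)"
proof -
  have "(\<lambda>s. f z s) differentiable (at t within tint T)"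
    using f t(1) by (cases rule: smooth_strip.cases) auto
  then have "(\<lambda>s. f z s) differentiable (at t)"
    by (simp add: at_within_tint[OF t])
  then obtain D where D: "((\<lambda>s. f z s) has_real_derivative D) (at t)"
    by (auto simp: real_differentiable_def)
  with pt_eqI[OF t, of f z D] show ?thesis by (simp add: at_within_tint[OF t])
qed

lemma continuous_on_Times_near:
  fixes F :: "real \<Rightarrow> real \<Rightarrow> real"
  assumes F: "continuous_on (UNIV \<times> I) (\<lambda>p. F (fst p) (snd p))" and I: "open I" "t0 \<in> I" and e: "0 < e"
  obtains d where "0 < d" "\<And>y s. \<bar>y - z0\<bar> < d \<Longrightarrow> \<bar>s - t0\<bar> < d \<Longrightarrow> s \<in> I \<and> \<bar>F y s - F z0 t0\<bar> < e"
proof -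
  obtain d1 where d1: "0 < d1" "\<And>p. p \<in> UNIV \<times> I \<Longrightarrow> dist p (z0, t0) < d1 \<Longrightarrow>
      dist (F (fst p) (snd p)) (F z0 t0) < e"
    using F e I(2) unfolding continuous_on_iff by fastforce
  obtain d2 where d2: "0 < d2" "ball t0 d2 \<subseteq> I"
    using I openE by blast
  show ?thesis
  proof (rule that[of "min (d1/2) d2"])
    fix y s assume y: "\<bar>y - z0\<bar> < min (d1/2) d2" and s: "\<bar>s - t0\<bar> < min (d1/2) d2"
    have sI: "s \<in> I" using d2 s by (auto simp: dist_real_def abs_minus_commute)
    have "dist (y, s) (z0, t0) < d1"
      using norm_Pair_le[of "y - z0" "s - t0"] y s by (simp add: dist_norm)
    with d1(2)[of "(y, s)"] sI show "s \<in> I \<and> \<bar>F y s - F z0 t0\<bar> < e"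
      by (simp add: dist_real_def)
  qed (use d1 d2 in auto)
qed

lemma second_difference_mvt:
  fixes F Fx Fxy :: "real \<Rightarrow> real \<Rightarrow> real"
  assumes hk: "0 < h" "0 < k"
    and dx: "\<And>x y. x0 \<le> x \<Longrightarrow> x \<le> x0 + h \<Longrightarrow> y0 \<le> y \<Longrightarrow> y \<le> y0 + k \<Longrightarrow>
      ((\<lambda>x. F x y) has_real_derivative Fx x y) (at x)"
    and dxy: "\<And>x y. x0 \<le> x \<Longrightarrow> x \<le> x0 + h \<Longrightarrow> y0 \<le> y \<Longrightarrow> y \<le> y0 + k \<Longrightarrow>
      ((\<lambda>y. Fx x y) has_real_derivative Fxy x y) (at y)"
  obtains \<xi> \<tau> where "x0 < \<xi>" "\<xi> < x0 + h" "y0 < \<tau>" "\<tau> < y0 + k"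
    "F (x0 + h) (y0 + k) - F (x0 + h) y0 - F x0 (y0 + k) + F x0 y0 = h * k * Fxy \<xi> \<tau>"
proof -
  have "\<exists>\<xi>. x0 < \<xi> \<and> \<xi> < x0 + h \<and>
      (\<lambda>x. F x (y0 + k) - F x y0) (x0 + h) - (\<lambda>x. F x (y0 + k) - F x y0) x0
        = (x0 + h - x0) * (Fx \<xi> (y0 + k) - Fx \<xi> y0)"
    by (rule MVT2) (use hk in \<open>auto intro!: derivative_eq_intros dx\<close>)
  then obtain \<xi> where \<xi>: "x0 < \<xi>" "\<xi> < x0 + h"
    "F (x0 + h) (y0 + k) - F (x0 + h) y0 - F x0 (y0 + k) + F x0 y0 = h * (Fx \<xi> (y0 + k) - Fx \<xi> y0)"
    by (auto simp: algebra_simps)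
  have "\<exists>\<tau>. y0 < \<tau> \<and> \<tau> < y0 + k \<and> Fx \<xi> (y0 + k) - Fx \<xi> y0 = (y0 + k - y0) * Fxy \<xi> \<tau>"
    by (rule MVT2) (use hk \<xi>(1,2) in \<open>auto intro!: dxy\<close>)
  then obtain \<tau> where "y0 < \<tau>" "\<tau> < y0 + k" "Fx \<xi> (y0 + k) - Fx \<xi> y0 = k * Fxy \<xi> \<tau>"
    by auto
  with \<xi> show ?thesis by (intro that[of \<xi> \<tau>]) auto
qed

lemma mixed_partials_eq:
  fixes f fz ft fzt ftz :: "real \<Rightarrow> real \<Rightarrow> real"
  assumes I: "open I" "t0 \<in> I"
    and dz: "\<And>y s. s \<in> I \<Longrightarrow> ((\<lambda>y. f y s) has_real_derivative fz y s) (at y)"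
    and dt: "\<And>y s. s \<in> I \<Longrightarrow> ((\<lambda>s. f y s) has_real_derivative ft y s) (at s)"
    and dzt: "\<And>y s. s \<in> I \<Longrightarrow> ((\<lambda>s. fz y s) has_real_derivative fzt y s) (at s)"
    and dtz: "\<And>y s. s \<in> I \<Longrightarrow> ((\<lambda>y. ft y s) has_real_derivative ftz y s) (at y)"
    and c_zt: "continuous_on (UNIV \<times> I) (\<lambda>p. fzt (fst p) (snd p))"
    and c_tz: "continuous_on (UNIV \<times> I) (\<lambda>p. ftz (fst p) (snd p))"
  shows "fzt z0 t0 = ftz z0 t0"
proof (rule ccontr)
  assume ne: "fzt z0 t0 \<noteq> ftz z0 t0"
  define e where "e = \<bar>fzt z0 t0 - ftz z0 t0\<bar> / 2"
  have e: "0 < e" using ne by (simp add: e_def)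
  obtain d1 where d1: "0 < d1"
    "\<And>y s. \<bar>y - z0\<bar> < d1 \<Longrightarrow> \<bar>s - t0\<bar> < d1 \<Longrightarrow> s \<in> I \<and> \<bar>fzt y s - fzt z0 t0\<bar> < e"
    using continuous_on_Times_near[OF c_zt I e] by blast
  obtain d2 where d2: "0 < d2"
    "\<And>y s. \<bar>y - z0\<bar> < d2 \<Longrightarrow> \<bar>s - t0\<bar> < d2 \<Longrightarrow> s \<in> I \<and> \<bar>ftz y s - ftz z0 t0\<bar> < e"
    using continuous_on_Times_near[OF c_tz I e] by blast
  define h where "h = min d1 d2 / 2"
  have h: "0 < h" "h < d1" "h < d2" using d1 d2 by (auto simp: h_def)
  have inI: "s \<in> I" if "t0 \<le> s" "s \<le> t0 + h" for s
    using d1(2)[of z0 s] d1(1) h that by auto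
  obtain \<xi> \<tau> where \<xi>\<tau>: "z0 < \<xi>" "\<xi> < z0 + h" "t0 < \<tau>" "\<tau> < t0 + h"
    "f (z0 + h) (t0 + h) - f (z0 + h) t0 - f z0 (t0 + h) + f z0 t0 = h * h * fzt \<xi> \<tau>"
    by (rule second_difference_mvt[of h h z0 t0 f fz fzt]) (use h inI dz dzt in auto)
  obtain \<tau>' \<xi>' where \<tau>'\<xi>': "t0 < \<tau>'" "\<tau>' < t0 + h" "z0 < \<xi>'" "\<xi>' < z0 + h"
    "f (z0 + h) (t0 + h) - f z0 (t0 + h) - f (z0 + h) t0 + f z0 t0 = h * h * ftz \<xi>' \<tau>'"
    by (rule second_difference_mvt[of h h t0 z0 "\<lambda>s y. f y s" "\<lambda>s y. ft y s" "\<lambda>s y. ftz y s"])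
       (use h inI dt dtz in auto)
  have "h * h * fzt \<xi> \<tau> = h * h * ftz \<xi>' \<tau>'"
    using \<xi>\<tau>(5) \<tau>'\<xi>'(5) by linarith
  then have "fzt \<xi> \<tau> = ftz \<xi>' \<tau>'"
    using h(1) by simp
  moreover have "\<bar>fzt \<xi> \<tau> - fzt z0 t0\<bar> < e" using d1(2) \<xi>\<tau> h by auto
  moreover have "\<bar>ftz \<xi>' \<tau>' - ftz z0 t0\<bar> < e" using d2(2) \<tau>'\<xi>' h by auto
  ultimately show False by (simp add: e_def abs_if split: if_split_asm)
qed

lemma smooth_strip_pt_pz:
  assumes f: "smooth_strip T f" and t: "t \<in> tint T" "0 < t"
  shows "pt T (pz f) z t = pz (pt T f) z t"
proof (rule mixed_partials_eq[OF open_tint_pos[of T], where f=f and fz="pz f" and ft="pt T f"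
      and fzt="pt T (pz f)" and ftz="pz (pt T f)"])
  let ?I = "{t \<in> tint T. 0 < t}"
  show "t \<in> ?I" using t by simp
  show "continuous_on (UNIV \<times> ?I) (\<lambda>p. pt T (pz f) (fst p) (snd p))"
    by (rule continuous_on_subset[OF smooth_strip_continuous[OF smooth_strip_pt[OF smooth_strip_pz[OF f]]]]) auto
  show "continuous_on (UNIV \<times> ?I) (\<lambda>p. pz (pt T f) (fst p) (snd p))"
    by (rule continuous_on_subset[OF smooth_strip_continuous[OF smooth_strip_pz[OF smooth_strip_pt[OF f]]]]) auto
qed (auto intro: smooth_strip_has_derivative_z smooth_strip_has_derivative_t
    smooth_strip_pz smooth_strip_pt f)

lemma smooth_strip_pz_has_derivative_t:
  assumes f: "smooth_strip T f" and t: "t \<in> tint T" "0 < t"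
    and D: "((\<lambda>y. pt T f y t) has_real_derivative D) (at z)"
  shows "((\<lambda>s. pz f z s) has_real_derivative D) (at t)"
proof -
  have "pz (pt T f) z t = D"
    unfolding pz_def by (rule DERIV_imp_deriv[OF D])
  then show ?thesis
    using smooth_strip_has_derivative_t[OF smooth_strip_pz[OF f] t, where z = z]
      smooth_strip_pt_pz[OF f t, where z = z] by simp
qed

lemma has_derivative_sd:
  assumes "(\<lambda>y. F y t) differentiable (at z)" "\<phi> z t \<noteq> 0"
  shows "((\<lambda>y. F y t) has_real_derivative \<phi> z t * sd \<phi> F z t) (at z)"
  using assms by (simp add: sd_def pz_def DERIV_deriv_iff_real_differentiable)

lemma sd_differentiable_z:
  assumes "smooth_strip T F" "smooth_strip T \<phi>" "t \<in> tint T" "\<phi> z t \<noteq> 0"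
  shows "(\<lambda>y. sd \<phi> F y t) differentiable (at z)"
  unfolding sd_def using assms
  by (intro differentiable_divide smooth_strip_differentiable_z smooth_strip_pz)

lemma sd_sd_eq:
  assumes F: "smooth_strip T F" and \<phi>: "smooth_strip T \<phi>" and t: "t \<in> tint T" and nz: "\<phi> z t \<noteq> 0"
  shows "sd \<phi> (sd \<phi> F) z t = (pz (pz F) z t * \<phi> z t - pz F z t * pz \<phi> z t) / \<phi> z t ^ 3"
proof -
  have "((\<lambda>y. sd \<phi> F y t) has_real_derivative
      (pz (pz F) z t * \<phi> z t - pz F z t * pz \<phi> z t) / \<phi> z t ^ 2) (at z)"
    unfolding sd_def
    by (rule derivative_eq_intros smooth_strip_has_derivative_z[OF smooth_strip_pz[OF F] t]
        smooth_strip_has_derivative_z[OF \<phi> t] nz refl)+ (simp add: power2_eq_square)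
  then have "pz (sd \<phi> F) z t = (pz (pz F) z t * \<phi> z t - pz F z t * pz \<phi> z t) / \<phi> z t ^ 2"
    unfolding pz_def[of "sd \<phi> F"] by (rule DERIV_imp_deriv)
  then show ?thesis
    using nz by (simp add: sd_def[of _ "sd \<phi> F"] power3_eq_cube power2_eq_square)
qed

lemma sd_sd_differentiable_z:
  assumes F: "smooth_strip T F" and \<phi>: "smooth_strip T \<phi>" and t: "t \<in> tint T"
    and nz: "\<And>y. \<phi> y t \<noteq> 0"
  shows "(\<lambda>y. sd \<phi> (sd \<phi> F) y t) differentiable (at z)"
proof -
  have "(\<lambda>y. sd \<phi> (sd \<phi> F) y t) = (\<lambda>y. (pz (pz F) y t * \<phi> y t - pz F y t * pz \<phi> y t) / \<phi> y t ^ 3)"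
    using sd_sd_eq[OF F \<phi> t nz] by blast
  moreover have d: "(\<lambda>y. G y t) differentiable (at z)" if "smooth_strip T G" for G
    using smooth_strip_differentiable_z[OF that t] .
  ultimately show ?thesis
    by (simp, intro differentiable_divide differentiable_diff differentiable_mult differentiable_power
        d smooth_strip_pz F \<phi>) (simp add: nz)
qed

lemma continuous_on_sd:
  assumes "smooth_strip T F" "smooth_strip T \<phi>" "\<And>z t. t \<in> tint T \<Longrightarrow> \<phi> z t \<noteq> 0"
  shows "continuous_on (UNIV \<times> tint T) (\<lambda>p. sd \<phi> F (fst p) (snd p))"
  unfolding sd_def using assms
  by (intro continuous_intros smooth_strip_continuous smooth_strip_pz) auto

lemma pz_periodic:
  assumes f: "smooth_strip T f" and t: "t \<in> tint T" and per: "\<And>z. f (z + 2*pi) t = f z t"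
  shows "pz f (z + 2*pi) t = pz f z t"
proof -
  have "((\<lambda>y. f (y + 2*pi) t) has_real_derivative pz f (z + 2*pi) t) (at z)"
    using DERIV_shift[of "\<lambda>y. f y t" "pz f (z + 2*pi) t" z "2*pi"]
      smooth_strip_has_derivative_z[OF f t, of "z + 2*pi"] by simp
  then have "((\<lambda>y. f y t) has_real_derivative pz f (z + 2*pi) t) (at z)"
    by (simp add: per)
  then show ?thesis
    using smooth_strip_has_derivative_z[OF f t, of z] DERIV_unique by blast
qed

section \<open>A minimum principle for periodic functions\<close>

lemma global_min_second_derivative:
  fixes g g' :: "real \<Rightarrow> real"
  assumes min: "\<And>y. g z \<le> g y" and dg: "\<And>y. (g has_real_derivative g' y) (at y)"
    and dg': "(g' has_real_derivative g2) (at z)"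
  shows "g' z = 0 \<and> 0 \<le> g2"
proof
  show g'0: "g' z = 0"
    using DERIV_local_min[OF dg[of z], of 1] min by auto
  show "0 \<le> g2"
  proof (rule ccontr)
    assume "\<not> 0 \<le> g2"
    then obtain d where d: "0 < d" "\<And>h. 0 < h \<Longrightarrow> h < d \<Longrightarrow> g' z < g' (z - h)"
      using DERIV_neg_dec_left[OF dg'] by force
    have "\<exists>\<xi>. z - d/2 < \<xi> \<and> \<xi> < z \<and> g z - g (z - d/2) = (z - (z - d/2)) * g' \<xi>"
      by (rule MVT2) (use d dg in auto)
    then obtain \<xi> where \<xi>: "z - d/2 < \<xi>" "\<xi> < z" "g z - g (z - d/2) = d/2 * g' \<xi>"
      by auto
    have "0 < g' \<xi>"
      using d(2)[of "z - \<xi>"] \<xi> g'0 by simp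
    then have "g (z - d/2) < g z"
      using \<xi>(3) d(1) by (smt (verit) mult_pos_pos zero_less_divide_iff)
    with min show False by (meson not_le)
  qed
qed

lemma global_min_second_derivative_weighted:
  fixes W W1 p :: "real \<Rightarrow> real"
  assumes min: "\<And>y. W z \<le> W y"
    and dW: "\<And>y. (W has_real_derivative p y * W1 y) (at y)"
    and dW1: "(W1 has_real_derivative p z * W2) (at z)"
    and dp: "(p has_real_derivative p') (at z)" and pos: "0 < p z"
  shows "W1 z = 0 \<and> 0 \<le> W2"
proof -
  have "((\<lambda>y. p y * W1 y) has_real_derivative p' * W1 z + p z * W2 * p z) (at z)"
    using DERIV_mult[OF dp dW1] .
  from global_min_second_derivative[OF min dW this] have "W1 z = 0" "0 \<le> p z * p z * W2"
    using pos by (auto simp: mult_ac)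
  moreover have "0 < p z * p z" using pos by simp
  ultimately show ?thesis by (simp add: zero_le_mult_iff)
qed

lemma periodic_representative:
  assumes per: "\<And>z. u (z + 2*pi) = u z"
  obtains y where "y \<in> {0..2*pi}" "u y = u z"
proof -
  interpret periodic_fun_simple u "2*pi" by standard (rule per)
  define n where "n = \<lfloor>z / (2*pi)\<rfloor>"
  have "real_of_int n \<le> z / (2*pi)" "z / (2*pi) < real_of_int n + 1"
    unfolding n_def by linarith+
  then have "z - of_int n * (2*pi) \<in> {0..2*pi}"
    by (simp add: field_simps)
  moreover have "u (z - of_int n * (2*pi)) = u z"
    by (rule minus_of_int)
  ultimately show ?thesis by (rule that)
qed

lemma abs_le_SUP_period:
  fixes u :: "real \<Rightarrow> real"
  assumes cont: "continuous_on {0..2*pi} u" and per: "\<And>z. u (z + 2*pi) = u z"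
  shows "\<bar>u z\<bar> \<le> (SUP y\<in>{0..2*pi}. \<bar>u y\<bar>)"
proof -
  obtain y where y: "y \<in> {0..2*pi}" "u y = u z"
    using periodic_representative[of u z, OF per] .
  have "compact ((\<lambda>y. \<bar>u y\<bar>) ` {0..2*pi})"
    by (intro compact_continuous_image continuous_intros cont compact_Icc)
  then have "bdd_above ((\<lambda>y. \<bar>u y\<bar>) ` {0..2*pi})"
    by (intro bounded_imp_bdd_above compact_imp_bounded)
  from cSUP_upper[OF y(1) this] y(2) show ?thesis by simp
qed

lemma periodic_min_on_slab:
  fixes v :: "real \<times> real \<Rightarrow> real"
  assumes cont: "continuous_on ({0..2*pi} \<times> {0..t1}) v" and t1: "0 \<le> t1"
    and per: "\<And>z t. 0 \<le> t \<Longrightarrow> t \<le> t1 \<Longrightarrow> v (z + 2*pi, t) = v (z, t)"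
  obtains z0 t0 where "z0 \<in> {0..2*pi}" "0 \<le> t0" "t0 \<le> t1" "\<And>z t. 0 \<le> t \<Longrightarrow> t \<le> t1 \<Longrightarrow> v (z0, t0) \<le> v (z, t)"
proof -
  obtain p where p: "p \<in> {0..2*pi} \<times> {0..t1}" and min: "\<And>q. q \<in> {0..2*pi} \<times> {0..t1} \<Longrightarrow> v p \<le> v q"
    using continuous_attains_inf[OF compact_Times[OF compact_Icc compact_Icc] _ cont] t1 by auto
  show ?thesis
  proof (rule that[of "fst p" "snd p"])
    fix z t assume t: "0 \<le> t" "t \<le> t1"
    obtain y where "y \<in> {0..2*pi}" "v (y, t) = v (z, t)"
      using periodic_representative[of "\<lambda>z. v (z, t)"] per[OF t] by metis
    with min[of "(y, t)"] t show "v (fst p, snd p) \<le> v (z, t)" by simp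
  qed (use p in auto)
qed

lemma exp_weighted_decreases_left:
  fixes w :: "real \<Rightarrow> real"
  assumes dw: "(w has_real_derivative D) (at t0)" and D: "M * w t0 < D" and t0: "0 < t0"
  obtains h where "0 < h" "h \<le> t0" "exp (- M * (t0 - h)) * w (t0 - h) < exp (- M * t0) * w t0"
proof -
  have "((\<lambda>s. exp (- M * s) * w s) has_real_derivative exp (- M * t0) * (D - M * w t0)) (at t0)"
    by (auto intro!: derivative_eq_intros dw simp: algebra_simps)
  moreover have "0 < exp (- M * t0) * (D - M * w t0)" using D by simp
  ultimately obtain d where d: "0 < d"
    "\<And>h. 0 < h \<Longrightarrow> h < d \<Longrightarrow> exp (- M * (t0 - h)) * w (t0 - h) < exp (- M * t0) * w t0"
    using DERIV_pos_inc_left by blast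
  show ?thesis
    by (rule that[of "min (d/2) t0"]) (use d t0 in auto)
qed

text \<open>The weight \<open>exp (- M t)\<close> with \<open>M \<ge> \<kappa>\<close> on the compact slab turns the hypothesis on
  negative spatial minima into a strict increase in time, so a negative minimum over the slab
  cannot exist.\<close>
lemma periodic_min_principle:
  fixes w \<kappa> :: "real \<Rightarrow> real \<Rightarrow> real"
  assumes cont_w: "continuous_on (UNIV \<times> tint T) (\<lambda>p. w (fst p) (snd p))"
    and cont_\<kappa>: "continuous_on (UNIV \<times> tint T) (\<lambda>p. \<kappa> (fst p) (snd p))"
    and per: "\<And>z t. t \<in> tint T \<Longrightarrow> w (z + 2*pi) t = w z t"
    and init: "\<And>z. 0 \<le> w z 0"
    and step: "\<And>z t. t \<in> tint T \<Longrightarrow> 0 < t \<Longrightarrow> \<forall>y. w z t \<le> w y t \<Longrightarrow> w z t < 0 \<Longrightarrow>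
      \<exists>D. ((\<lambda>s. w z s) has_real_derivative D) (at t) \<and> \<kappa> z t * w z t < D"
    and t1: "t1 \<in> tint T"
  shows "0 \<le> w z1 t1"
proof -
  let ?S = "{0..2*pi} \<times> {0..t1}"
  have "0 \<le> t1" using t1 by (simp add: tint_def)
  have S: "?S \<subseteq> UNIV \<times> tint T"
    using t1 tint_downward_closed by auto
  obtain pM where "pM \<in> ?S" and M: "\<And>q. q \<in> ?S \<Longrightarrow> \<kappa> (fst q) (snd q) \<le> \<kappa> (fst pM) (snd pM)"
    using continuous_attains_sup[OF compact_Times[OF compact_Icc compact_Icc] _
        continuous_on_subset[OF cont_\<kappa> S]] \<open>0 \<le> t1\<close> by fastforce
  define M where "M = \<kappa> (fst pM) (snd pM)"
  define v where "v q = exp (- M * snd q) * w (fst q) (snd q)" for q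
  have "continuous_on ?S v"
    unfolding v_def by (intro continuous_intros continuous_on_subset[OF cont_w S])
  then obtain z0 t0 where z0: "z0 \<in> {0..2*pi}" and t0: "0 \<le> t0" "t0 \<le> t1"
    and min: "\<And>z t. 0 \<le> t \<Longrightarrow> t \<le> t1 \<Longrightarrow> v (z0, t0) \<le> v (z, t)"
    by (rule periodic_min_on_slab[OF _ \<open>0 \<le> t1\<close>])
       (use per tint_downward_closed[OF t1] in \<open>auto simp: v_def\<close>)
  have t0T: "t0 \<in> tint T" using tint_downward_closed[OF t1 t0] .
  have "0 \<le> w z0 t0"
  proof (rule ccontr)
    assume "\<not> 0 \<le> w z0 t0"
    then have neg: "w z0 t0 < 0" by simp
    have "0 < t0"
      using init[of z0] neg t0(1) by (cases "t0 = 0") auto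
    have "\<forall>y. w z0 t0 \<le> w y t0"
      using min[OF t0] by (simp add: v_def)
    then obtain D where D: "((\<lambda>s. w z0 s) has_real_derivative D) (at t0)" "\<kappa> z0 t0 * w z0 t0 < D"
      using step[OF t0T \<open>0 < t0\<close>] neg by blast
    have "\<kappa> z0 t0 \<le> M" using M[of "(z0, t0)"] z0 t0 by (simp add: M_def)
    then have "M * w z0 t0 < D"
      using D(2) neg by (smt (verit) mult_right_mono_neg)
    then obtain h where "0 < h" "h \<le> t0" "v (z0, t0 - h) < v (z0, t0)"
      using exp_weighted_decreases_left[OF D(1) _ \<open>0 < t0\<close>] by (auto simp: v_def)
    with min[of "t0 - h" z0] t0 show False by simp
  qed
  then have "0 \<le> v (z0, t0)" by (simp add: v_def)
  also have "\<dots> \<le> v (z1, t1)" using min[of t1 z1] \<open>0 \<le> t1\<close> by simp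
  finally show ?thesis by (simp add: v_def zero_le_mult_iff)
qed

section \<open>The reaction terms\<close>

text \<open>The zeroth-order term of the flow: \<open>a\<^sub>t = a'' + a' (b'/b + c'/c) - 2 reaction a b c\<close>.\<close>
definition reaction :: "real \<Rightarrow> real \<Rightarrow> real \<Rightarrow> real" where
  "reaction x y z = (x^4 - (y^2 - z^2)^2) / (x * y^2 * z^2)"

lemma reaction_swap: "reaction x y z = reaction x z y"
  unfolding reaction_def by (simp add: power2_commute mult_ac)

definition reaction_exchange_poly :: "real \<Rightarrow> real \<Rightarrow> real \<Rightarrow> real" where
  "reaction_exchange_poly a b c =
     b^4 + a*b^3 + a^2*b^2 + a^3*b + a^4 + a*b*(b^2 + a*b + a^2) - 2*a*b*c^2 - c^4"

lemma reaction_exchange: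
  assumes "0 < a" "0 < b" "0 < c"
  shows "reaction b a c - reaction a b c = (b - a) * reaction_exchange_poly a b c / (a^2 * b^2 * c^2)"
proof -
  have "reaction b a c = b * (b^4 - (a^2 - c^2)^2) / (a^2 * b^2 * c^2)"
    "reaction a b c = a * (a^4 - (b^2 - c^2)^2) / (a^2 * b^2 * c^2)"
    unfolding reaction_def using assms by (simp_all add: power2_eq_square)
  moreover have "b * (b^4 - (a^2 - c^2)^2) - a * (a^4 - (b^2 - c^2)^2) = (b - a) * reaction_exchange_poly a b c"
    unfolding reaction_exchange_poly_def by algebra
  ultimately show ?thesis by (simp add: diff_divide_distrib[symmetric])
qed

text \<open>\<open>F, G, H\<close> stand for \<open>f, g, h\<close> at a spatial minimum of \<open>g - f\<close>, where \<open>f' = g' = F1\<close>,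
  \<open>h' = H1\<close> and \<open>f'' = F2 \<le> G2 = g''\<close>.\<close>
lemma order_gap_estimate:
  fixes F G H F1 H1 F2 G2 :: real
  assumes pos: "0 < F" "0 < G" "0 < H" and F2G2: "F2 \<le> G2" and GF: "G < F"
  shows "(F1^2 / (F*G) - 2 * reaction_exchange_poly F G H / (F^2*G^2*H^2) + 1) * (G - F)
    < (G2 + F1 * (F1/F + H1/H) - 2 * reaction G F H) - (F2 + F1 * (F1/G + H1/H) - 2 * reaction F G H)"
proof -
  define A where "A = F1^2 / (F*G)"
  define B where "B = reaction_exchange_poly F G H / (F^2*G^2*H^2)"
  have "F1 * (F1/F + H1/H) - F1 * (F1/G + H1/H) = A * (G - F)"
    using pos by (simp add: A_def field_simps power2_eq_square)
  moreover have "reaction G F H - reaction F G H = (G - F) * B"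
    using reaction_exchange[OF pos] by (simp add: B_def)
  moreover have "(A - 2 * B + 1) * (G - F) = A * (G - F) - 2 * ((G - F) * B) + (G - F)"
    by (simp add: algebra_simps)
  ultimately show ?thesis
    using F2G2 GF by (simp add: A_def B_def)
qed

lemma concave_quadratic_ge_min:
  fixes A B C x1 x x2 :: real
  assumes A: "A \<le> 0" and x: "x1 \<le> x" "x \<le> x2"
  shows "min (A * x1^2 + B * x1 + C) (A * x2^2 + B * x2 + C) \<le> A * x^2 + B * x + C"
proof (cases "x1 = x2")
  case True
  with x show ?thesis by simp
next
  case False
  define q where "q y = A * y^2 + B * y + C" for y
  define m where "m = min (q x1) (q x2)"
  have "(x2 - x1) * q x = (x2 - x) * q x1 + (x - x1) * q x2 - A * (x2 - x1) * (x - x1) * (x2 - x)"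
    unfolding q_def by algebra
  moreover have "(x2 - x) * m \<le> (x2 - x) * q x1" "(x - x1) * m \<le> (x - x1) * q x2"
    using x by (simp_all add: m_def mult_left_mono)
  moreover have "0 \<le> - A * (x2 - x1) * (x - x1) * (x2 - x)"
    using A x by (simp add: mult_nonneg_nonneg mult_nonpos_nonneg)
  ultimately have "(x2 - x1) * m \<le> (x2 - x1) * q x"
    by (simp add: algebra_simps)
  with False x show ?thesis
    by (simp add: q_def m_def)
qed

lemma reaction_pinching_gap:
  fixes a b c l :: real
  assumes a: "0 < a" and ab: "a \<le> b" and bc: "b \<le> c" and l: "1 < l" and lac: "l * a < c"
  shows "l * reaction a b c < reaction c a b"
proof -
  define q where
    "q s = (l*a - c) * s^2 + (2*c*a^2 - 2*l*a*c^2) * s + (c^5 - c*a^4 - l*a^5 + l*a*c^4)" for s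
  have ac: "a < c" using a l lac by (smt (verit) mult_less_cancel_right1)
  have "l * a^5 \<le> l^5 * a^5"
    using power_increasing[of 1 5 l] l a by simp
  also have "\<dots> < c^5"
    using lac a l by (simp add: power_mult_distrib[symmetric] power_strict_mono)
  finally have la5: "l * a^5 < c^5" .
  have "l * a^3 \<le> l^3 * a^3"
    using power_increasing[of 1 3 l] l a by simp
  also have "\<dots> < c^3"
    using lac a l by (simp add: power_mult_distrib[symmetric] power_strict_mono)
  also have "c^3 \<le> 2*c^3 - c*a^2"
    using a ac by (simp add: power3_eq_cube power2_eq_square mult_mono)
  finally have la3: "l * a^3 < 2*c^3 - c*a^2" .
  have "q (a^2) = c^5 - l*a^5 + l*a*(a^2 - c^2)^2"
    unfolding q_def by algebra
  then have q1: "0 < q (a^2)"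
    using la5 a l by (smt (verit) mult_pos_pos zero_le_power2 mult_nonneg_nonneg)
  have "q (c^2) = a^2 * (2*c^3 - c*a^2 - l*a^3)"
    unfolding q_def by algebra
  then have q2: "0 < q (c^2)"
    using la3 a by simp
  have "min (q (a^2)) (q (c^2)) \<le> q (b^2)"
    unfolding q_def
    by (rule concave_quadratic_ge_min) (use lac a ab bc in \<open>auto intro: power_mono\<close>)
  with q1 q2 have "0 < q (b^2) / (a^2 * b^2 * c^2)"
    using a ab ac by simp
  moreover have "reaction c a b - l * reaction a b c = q (b^2) / (a^2 * b^2 * c^2)"
    unfolding reaction_def q_def using a ab bc ac
    by (simp add: field_simps power2_eq_square) algebra
  ultimately show ?thesis by linarith
qed

text \<open>The same estimate at a spatial minimum of \<open>l f - h\<close>, where now \<open>h' = l F1\<close> and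
  \<open>h'' = H2 \<le> l F2 = l f''\<close>.\<close>
lemma pinching_gap_estimate:
  fixes F G H F1 G1 F2 H2 l :: real
  assumes pos: "0 < F" "0 < G" "0 < H" and FG: "F \<le> G" and GH: "G \<le> H" and l: "1 < l"
    and H2F2: "H2 \<le> l * F2" and lFH: "l * F < H"
  shows "l * F1^2 / (F*H) * (l*F - H)
    < l * (F2 + F1 * (G1/G + l*F1/H) - 2 * reaction F G H) - (H2 + l*F1 * (F1/F + G1/G) - 2 * reaction H F G)"
proof -
  have "l * (F1 * (G1/G + l*F1/H)) - l*F1 * (F1/F + G1/G) = l * F1^2 / (F*H) * (l*F - H)"
    using pos by (simp add: field_simps power2_eq_square)
  moreover have "l * reaction F G H < reaction H F G"
    by (rule reaction_pinching_gap) (use pos FG GH l lFH in auto)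
  ultimately show ?thesis
    using H2F2 by (simp add: algebra_simps)
qed

definition reaction_dx :: "real \<Rightarrow> real \<Rightarrow> real \<Rightarrow> real" where
  "reaction_dx x y z = 3*x^2/(y^2*z^2) + (y^2 - z^2)^2/(x^2*y^2*z^2)"

definition reaction_dy :: "real \<Rightarrow> real \<Rightarrow> real \<Rightarrow> real" where
  "reaction_dy x y z = -2*x^3/(y^3*z^2) - (2*y/z^2 - 2*z^2/y^3)/x"

definition reaction_dz :: "real \<Rightarrow> real \<Rightarrow> real \<Rightarrow> real" where
  "reaction_dz x y z = -2*x^3/(y^2*z^3) - (2*z/y^2 - 2*y^2/z^3)/x"

lemma reaction_has_derivative:
  assumes dF: "(F has_real_derivative F') (at w)" and dG: "(G has_real_derivative G') (at w)"
    and dH: "(H has_real_derivative H') (at w)" and nz: "F w \<noteq> 0" "G w \<noteq> 0" "H w \<noteq> 0"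
  shows "((\<lambda>y. reaction (F y) (G y) (H y)) has_real_derivative
    reaction_dx (F w) (G w) (H w) * F' + reaction_dy (F w) (G w) (H w) * G'
      + reaction_dz (F w) (G w) (H w) * H') (at w)"
  unfolding reaction_def
  apply (rule derivative_eq_intros dF dG dH refl)+
  using nz by (simp_all add: reaction_dx_def reaction_dy_def reaction_dz_def field_simps
      power2_eq_square power3_eq_cube power4_eq_xxxx)

text \<open>Minus the lower-order part of \<open>\<partial>\<^sub>t f'\<close> at a spatial critical point of \<open>f'\<close>, see
  \<open>sd_has_derivative_t_at_critical\<close>.\<close>
definition gradient_damping :: "real \<Rightarrow> real \<Rightarrow> real \<Rightarrow> real \<Rightarrow> real \<Rightarrow> real \<Rightarrow> real" where
  "gradient_damping x y z S p q = S * (p^2/y^2 + q^2/z^2)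
     + 2 * (reaction_dx x y z * S + reaction_dy x y z * p + reaction_dz x y z * q)"

lemma gradient_damping_sign_flip:
  assumes "\<sigma> = 1 \<or> \<sigma> = -1"
  shows "gradient_damping x y z (\<sigma> * S) (\<sigma> * p) (\<sigma> * q) = \<sigma> * gradient_damping x y z S p q"
  using assms by (auto simp: gradient_damping_def algebra_simps)

definition damping_weight :: "real \<Rightarrow> real \<Rightarrow> real \<Rightarrow> real" where
  "damping_weight x y z = (y^2*z/x * reaction_dy x y z)^2 + (y*z^2/x * reaction_dz x y z)^2"

text \<open>Complete the squares in \<open>p\<close> and \<open>q\<close>; what remains is controlled by
  \<open>reaction_dx x y z \<ge> 3 x\<^sup>2 / (y\<^sup>2 z\<^sup>2)\<close>.\<close>
lemma gradient_damping_pos: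
  assumes x: "0 < x" and y: "0 < y" and z: "0 < z" and S: "0 < S"
    and weight: "damping_weight x y z < 6 * S^2"
  shows "0 < gradient_damping x y z S p q"
proof -
  define r where "r = x^2 / (y^2 * z^2)"
  define W where "W = damping_weight x y z"
  have square: "- (g^2 * u^2) / S \<le> S * (w^2 / u^2) + 2 * g * w" if "0 < u" for g u w :: real
  proof -
    have "0 \<le> S * (w / u + g * u / S)^2" using S by simp
    also have "\<dots> = S * (w^2 / u^2) + 2 * g * w + g^2 * u^2 / S"
      using S that by (simp add: field_simps power2_eq_square)
    finally show ?thesis by (simp add: algebra_simps)
  qed
  have "(reaction_dy x y z)^2 * y^2 + (reaction_dz x y z)^2 * z^2 = W * r"
    unfolding W_def damping_weight_def r_def using x y z by (simp add: field_simps power2_eq_square)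
  then have "- ((reaction_dy x y z)^2 * y^2) / S - ((reaction_dz x y z)^2 * z^2) / S = - (W * r / S)"
    by (metis add_divide_distrib minus_add_distrib minus_divide_left diff_conv_add_uminus)
  moreover have "6 * r * S \<le> 2 * reaction_dx x y z * S"
  proof -
    have "3 * r \<le> reaction_dx x y z"
      unfolding reaction_dx_def r_def using x y z by simp
    from mult_right_mono[OF this, of "2 * S"] S show ?thesis by (simp add: algebra_simps)
  qed
  moreover have "6 * r * S - W * r / S = r * (6 * S^2 - W) / S"
    using S by (simp add: field_simps power2_eq_square)
  moreover have "0 < r * (6 * S^2 - W) / S"
    using x y z S weight by (simp add: r_def W_def)
  ultimately show ?thesis
    unfolding gradient_damping_def
    using square[OF y, of "reaction_dy x y z" p] square[OF z, of "reaction_dz x y z" q]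
    by (simp add: algebra_simps)
qed

lemma damping_weight_eq:
  assumes "0 < x" "0 < y" "0 < z"
  shows "damping_weight x y z =
    (2*z^3/(x^2*y) - 2*x^2/(y*z) - 2*y^3/(x^2*z))^2 + (2*y^3/(x^2*z) - 2*x^2/(y*z) - 2*z^3/(x^2*y))^2"
  unfolding damping_weight_def reaction_dy_def reaction_dz_def using assms
  by (simp add: field_simps power2_eq_square power3_eq_cube)

lemma damping_weight_le:
  assumes x: "0 < x" and y: "0 < y" and z: "0 < z"
    and A: "2*z^3/(x^2*y) \<le> A" "2*x^2/(y*z) + 2*y^3/(x^2*z) \<le> A"
    and B: "2*y^3/(x^2*z) \<le> B" "2*z^3/(x^2*y) + 2*x^2/(y*z) \<le> B"
  shows "damping_weight x y z \<le> A^2 + B^2"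
proof -
  define \<alpha> \<beta> \<gamma> where "\<alpha> = 2*z^3/(x^2*y)" "\<beta> = 2*x^2/(y*z)" "\<gamma> = 2*y^3/(x^2*z)"
  have "0 \<le> \<alpha>" "0 \<le> \<beta>" "0 \<le> \<gamma>" using x y z by (simp_all add: \<alpha>_\<beta>_\<gamma>_def)
  then have "\<bar>\<alpha> - \<beta> - \<gamma>\<bar> \<le> \<bar>A\<bar>" "\<bar>\<gamma> - \<beta> - \<alpha>\<bar> \<le> \<bar>B\<bar>"
    using A B unfolding \<alpha>_\<beta>_\<gamma>_def[symmetric] by linarith+
  then have "(\<alpha> - \<beta> - \<gamma>)^2 \<le> A^2" "(\<gamma> - \<beta> - \<alpha>)^2 \<le> B^2"
    by (simp_all add: abs_le_square_iff)
  then show ?thesis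
    using damping_weight_eq[OF x y z] by (simp add: \<alpha>_\<beta>_\<gamma>_def)
qed

lemma damping_weight_smallest:
  assumes x: "0 < x" and xy: "x \<le> y" and yz: "y \<le> z" and zx: "z \<le> 2*x"
  shows "damping_weight x y z \<le> 580"
proof -
  have y: "0 < y" and z: "0 < z" using x xy yz by auto
  have "z^3 \<le> (2*x)^3" using z zx by (intro power_mono) auto
  also have "\<dots> = 8 * x^2 * x" by (simp add: power3_eq_cube power2_eq_square)
  also have "\<dots> \<le> 8 * x^2 * y" using xy x by simp
  finally have \<alpha>: "2*z^3/(x^2*y) \<le> 16"
    by (intro pos_divide_le_eq[THEN iffD2]) (use x y in \<open>auto simp: mult_ac\<close>)
  have "x * x \<le> y * z" using x xy yz by (intro mult_mono) auto
  then have \<beta>: "2*x^2/(y*z) \<le> 2"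
    by (intro pos_divide_le_eq[THEN iffD2]) (use y z in \<open>auto simp: power2_eq_square\<close>)
  have "y^2 \<le> (2*x)^2" using y yz zx by (intro power_mono) auto
  then have "y^2 * y \<le> (2*x)^2 * z" using y yz by (intro mult_mono) auto
  then have \<gamma>: "2*y^3/(x^2*z) \<le> 8"
    by (intro pos_divide_le_eq[THEN iffD2]) (use x z in \<open>auto simp: power3_eq_cube power2_eq_square\<close>)
  have "damping_weight x y z \<le> 16^2 + 18^2"
    by (rule damping_weight_le[OF x y z]) (use \<alpha> \<beta> \<gamma> in auto)
  then show ?thesis by simp
qed

lemma quartic_middle_bound:
  fixes x y z :: real
  assumes y: "0 < y" and yx: "y \<le> x" and xz: "x \<le> z" and zy: "z \<le> 2*y"
  shows "x^4 + z^4 \<le> 9 * x^2 * y * z"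
proof -
  define q where "q w = (-1) * w^2 + (9 * y * z) * w + (- (z^4))" for w :: real
  have z: "0 < z" using y yx xz by simp
  have "z^4 \<le> 8 * y^3 * z"
  proof -
    have "z^3 \<le> (2*y)^3" using z zy by (intro power_mono) auto
    then show ?thesis using z by (simp add: power3_eq_cube power4_eq_xxxx)
  qed
  moreover have "y^4 \<le> y^3 * z"
    using y yx xz by (simp add: power3_eq_cube power4_eq_xxxx mult_left_mono)
  ultimately have "0 \<le> q (y^2)"
    by (simp add: q_def power4_eq_xxxx power3_eq_cube power2_eq_square algebra_simps)
  moreover have "0 \<le> q (z^2)"
  proof -
    have "q (z^2) = z^3 * (9*y - 2*z)"
      by (simp add: q_def algebra_simps power4_eq_xxxx power3_eq_cube power2_eq_square)
    then show ?thesis using z zy by simp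
  qed
  moreover have "min (q (y^2)) (q (z^2)) \<le> q (x^2)"
    unfolding q_def by (rule concave_quadratic_ge_min) (use y yx xz in \<open>auto intro: power_mono\<close>)
  ultimately have "0 \<le> q (x^2)" by linarith
  then show ?thesis
    by (simp add: q_def power4_eq_xxxx power2_eq_square algebra_simps)
qed

lemma damping_weight_middle:
  assumes y: "0 < y" and yx: "y \<le> x" and xz: "x \<le> z" and zy: "z \<le> 2*y"
  shows "damping_weight x y z \<le> 580"
proof -
  have x: "0 < x" and z: "0 < z" using y yx xz by auto
  have "z^3 \<le> (2*y)^3" using z zy by (intro power_mono) auto
  also have "\<dots> = 8 * (y * y) * y" by (simp add: power3_eq_cube)
  also have "\<dots> \<le> 8 * (x * x) * y" using yx y by (simp add: mult_mono)
  finally have \<alpha>: "2*z^3/(x^2*y) \<le> 16"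
    by (intro pos_divide_le_eq[THEN iffD2]) (use x y in \<open>auto simp: power2_eq_square mult_ac\<close>)
  have "x * x \<le> (2*y) * z" using x xz zy by (intro mult_mono) auto
  then have \<beta>: "2*x^2/(y*z) \<le> 4"
    by (intro pos_divide_le_eq[THEN iffD2]) (use y z in \<open>auto simp: power2_eq_square\<close>)
  have "y * y \<le> x * x" using y yx by (intro mult_mono) auto
  then have "(y * y) * y \<le> (x * x) * z" using y yx xz by (intro mult_mono) auto
  then have \<gamma>: "2*y^3/(x^2*z) \<le> 2"
    by (intro pos_divide_le_eq[THEN iffD2]) (use x z in \<open>auto simp: power3_eq_cube power2_eq_square\<close>)
  have "2*z^3/(x^2*y) + 2*x^2/(y*z) = 2*(x^4 + z^4)/(x^2*y*z)"
    using x y z by (simp add: field_simps power2_eq_square power3_eq_cube power4_eq_xxxx)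
  also have "\<dots> \<le> 18"
    by (intro pos_divide_le_eq[THEN iffD2]) (use quartic_middle_bound[OF y yx xz zy] x y z in auto)
  finally have \<alpha>\<beta>: "2*z^3/(x^2*y) + 2*x^2/(y*z) \<le> 18" .
  have "damping_weight x y z \<le> 16^2 + 18^2"
    by (rule damping_weight_le[OF x y z]) (use \<alpha> \<beta> \<gamma> \<alpha>\<beta> in auto)
  then show ?thesis by simp
qed

lemma damping_weight_largest:
  assumes y: "0 < y" and yz: "y \<le> z" and zx: "z \<le> x" and xy: "x \<le> 2*y"
  shows "damping_weight x y z \<le> 244"
proof -
  have x: "0 < x" and z: "0 < z" using y yz zx by auto
  have "z * z \<le> x * x" using z zx by (intro mult_mono) auto
  then have "(z * z) * z \<le> (x * x) * (2*y)" using z zx xy yz by (intro mult_mono) auto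
  then have \<alpha>: "2*z^3/(x^2*y) \<le> 4"
    by (intro pos_divide_le_eq[THEN iffD2]) (use x y in \<open>auto simp: power3_eq_cube power2_eq_square\<close>)
  have "x * x \<le> (2*y) * (2*z)" using x xy yz by (intro mult_mono) auto
  then have \<beta>: "2*x^2/(y*z) \<le> 8"
    by (intro pos_divide_le_eq[THEN iffD2]) (use y z in \<open>auto simp: power2_eq_square\<close>)
  have "y * y \<le> x * x" using y yz zx by (intro mult_mono) auto
  then have "(y * y) * y \<le> (x * x) * z" using y yz zx by (intro mult_mono) auto
  then have \<gamma>: "2*y^3/(x^2*z) \<le> 2"
    by (intro pos_divide_le_eq[THEN iffD2]) (use x z in \<open>auto simp: power3_eq_cube power2_eq_square\<close>)
  have "damping_weight x y z \<le> 10^2 + 12^2"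
    by (rule damping_weight_le[OF x y z]) (use \<alpha> \<beta> \<gamma> in auto)
  then show ?thesis by simp
qed

section \<open>The warped Ricci flow system\<close>

definition periodic_profile :: "ereal \<Rightarrow> (real \<Rightarrow> real \<Rightarrow> real) \<Rightarrow> bool" where
  "periodic_profile T u \<longleftrightarrow> smooth_strip T u \<and> (\<forall>z. \<forall>t\<in>tint T. 0 < u z t \<and> u (z + 2*pi) t = u z t)"

definition warped_evolution :: "ereal \<Rightarrow> (real \<Rightarrow> real \<Rightarrow> real) \<Rightarrow> (real \<Rightarrow> real \<Rightarrow> real)
    \<Rightarrow> (real \<Rightarrow> real \<Rightarrow> real) \<Rightarrow> (real \<Rightarrow> real \<Rightarrow> real) \<Rightarrow> bool" where
  "warped_evolution T \<phi> f g h \<longleftrightarrow> (\<forall>z. \<forall>t\<in>tint T. ((\<lambda>s. f z s) has_real_derivative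
     sd \<phi> (sd \<phi> f) z t + sd \<phi> f z t * (sd \<phi> g z t / g z t + sd \<phi> h z t / h z t)
       - 2 * reaction (f z t) (g z t) (h z t)) (at t within tint T))"

lemma warped_evolution_swap: "warped_evolution T \<phi> f g h \<Longrightarrow> warped_evolution T \<phi> f h g"
  unfolding warped_evolution_def by (simp add: reaction_swap add.commute)

lemma warped_evolution_at:
  assumes "warped_evolution T \<phi> f g h" "t \<in> tint T" "0 < t"
  shows "((\<lambda>s. f z s) has_real_derivative
     sd \<phi> (sd \<phi> f) z t + sd \<phi> f z t * (sd \<phi> g z t / g z t + sd \<phi> h z t / h z t)
       - 2 * reaction (f z t) (g z t) (h z t)) (at t)"
  using assms(1)[unfolded warped_evolution_def, rule_format, OF assms(2)]
  by (simp add: at_within_tint[OF assms(2,3)])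

locale warped_ricci_flow =
  fixes T :: ereal and \<phi> f g h :: "real \<Rightarrow> real \<Rightarrow> real"
  assumes T_pos: "0 < T"
    and profiles: "periodic_profile T \<phi>" "periodic_profile T f" "periodic_profile T g" "periodic_profile T h"
    and evolution: "warped_evolution T \<phi> f g h" "warped_evolution T \<phi> g f h" "warped_evolution T \<phi> h f g"
    and length_evolution: "\<And>z t. t \<in> tint T \<Longrightarrow> ((\<lambda>s. \<phi> z s) has_real_derivative
      \<phi> z t * (sd \<phi> (sd \<phi> f) z t / f z t + sd \<phi> (sd \<phi> g) z t / g z t + sd \<phi> (sd \<phi> h) z t / h z t))
      (at t within tint T)"

lemma rf_solution_warped_ricci_flow:
  assumes "rf_solution T \<phi> a b c"
  shows "warped_ricci_flow T \<phi> a b c"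
  using assms unfolding rf_solution_def warped_ricci_flow_def periodic_profile_def warped_evolution_def
    reaction_def
  by (simp add: mult_ac)

lemma warped_ricci_flow_swap12:
  assumes "warped_ricci_flow T \<phi> f g h"
  shows "warped_ricci_flow T \<phi> g f h"
proof -
  interpret warped_ricci_flow T \<phi> f g h by (fact assms)
  show ?thesis
  proof
    show "warped_evolution T \<phi> h g f"
      by (rule warped_evolution_swap[OF evolution(3)])
    show "((\<lambda>s. \<phi> z s) has_real_derivative \<phi> z t * (sd \<phi> (sd \<phi> g) z t / g z t
      + sd \<phi> (sd \<phi> f) z t / f z t + sd \<phi> (sd \<phi> h) z t / h z t)) (at t within tint T)"
      if "t \<in> tint T" for z t
      using length_evolution[OF that, of z] by (simp add: add_ac)
  qed (fact T_pos profiles evolution)+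
qed

lemma warped_ricci_flow_swap23:
  assumes "warped_ricci_flow T \<phi> f g h"
  shows "warped_ricci_flow T \<phi> f h g"
proof -
  interpret warped_ricci_flow T \<phi> f g h by (fact assms)
  show ?thesis
  proof
    show "warped_evolution T \<phi> f h g"
      by (rule warped_evolution_swap[OF evolution(1)])
    show "warped_evolution T \<phi> h f g" "warped_evolution T \<phi> g f h"
      by (fact evolution(3)) (fact evolution(2))
    show "((\<lambda>s. \<phi> z s) has_real_derivative \<phi> z t * (sd \<phi> (sd \<phi> f) z t / f z t
      + sd \<phi> (sd \<phi> h) z t / h z t + sd \<phi> (sd \<phi> g) z t / g z t)) (at t within tint T)"
      if "t \<in> tint T" for z t
      using length_evolution[OF that, of z] by (simp add: add_ac)
  qed (fact T_pos profiles)+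
qed

context warped_ricci_flow
begin

lemma smooth: "smooth_strip T \<phi>" "smooth_strip T f" "smooth_strip T g" "smooth_strip T h"
  using profiles by (simp_all add: periodic_profile_def)

lemma positive:
  assumes "t \<in> tint T"
  shows "0 < \<phi> z t" "0 < f z t" "0 < g z t" "0 < h z t"
  using profiles assms by (simp_all add: periodic_profile_def)

lemma periodic:
  assumes "t \<in> tint T"
  shows "f (z + 2*pi) t = f z t" "g (z + 2*pi) t = g z t" "h (z + 2*pi) t = h z t"
  using profiles assms by (simp_all add: periodic_profile_def)

lemma \<phi>_nonzero: "t \<in> tint T \<Longrightarrow> \<phi> z t \<noteq> 0"
  using positive(1) by (metis less_irrefl)

lemma continuous_sd: "smooth_strip T u \<Longrightarrow> continuous_on (UNIV \<times> tint T) (\<lambda>p. sd \<phi> u (fst p) (snd p))"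
  using continuous_on_sd smooth(1) \<phi>_nonzero by blast

lemma sd_periodic:
  assumes "smooth_strip T u" "t \<in> tint T" "\<And>z. u (z + 2*pi) t = u z t"
  shows "sd \<phi> u (z + 2*pi) t = sd \<phi> u z t"
proof -
  have "pz u (z + 2*pi) t = pz u z t"
    using pz_periodic[where f = u, OF assms] .
  moreover have "\<phi> (z + 2*pi) t = \<phi> z t"
    using profiles(1) assms(2) by (simp add: periodic_profile_def)
  ultimately show ?thesis by (simp add: sd_def)
qed

lemma has_derivative_z:
  assumes u: "smooth_strip T u" and t: "t \<in> tint T"
  shows "((\<lambda>y. u y t) has_real_derivative \<phi> z t * sd \<phi> u z t) (at z)"
    and "((\<lambda>y. sd \<phi> u y t) has_real_derivative \<phi> z t * sd \<phi> (sd \<phi> u) z t) (at z)"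
    and "((\<lambda>y. sd \<phi> (sd \<phi> u) y t) has_real_derivative \<phi> z t * sd \<phi> (sd \<phi> (sd \<phi> u)) z t) (at z)"
proof -
  have nz: "\<phi> y t \<noteq> 0" for y using \<phi>_nonzero[OF t] .
  show "((\<lambda>y. u y t) has_real_derivative \<phi> z t * sd \<phi> u z t) (at z)"
    by (rule has_derivative_sd[where F = u and \<phi> = \<phi> and t = t and z = z, OF smooth_strip_differentiable_z[OF u t] nz])
  show "((\<lambda>y. sd \<phi> u y t) has_real_derivative \<phi> z t * sd \<phi> (sd \<phi> u) z t) (at z)"
    by (rule has_derivative_sd[where F = "sd \<phi> u" and \<phi> = \<phi> and t = t and z = z, OF sd_differentiable_z[OF u smooth(1) t nz] nz])
  show "((\<lambda>y. sd \<phi> (sd \<phi> u) y t) has_real_derivative \<phi> z t * sd \<phi> (sd \<phi> (sd \<phi> u)) z t) (at z)"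
    by (rule has_derivative_sd[where F = "sd \<phi> (sd \<phi> u)" and \<phi> = \<phi> and t = t and z = z,
      OF sd_sd_differentiable_z[OF u smooth(1) t nz] nz])
qed

lemma profile_nonzero:
  assumes "p \<in> UNIV \<times> tint T"
  shows "f (fst p) (snd p) \<noteq> 0" "g (fst p) (snd p) \<noteq> 0" "h (fst p) (snd p) \<noteq> 0"
  using positive[of "snd p" "fst p"] assms by auto

lemma difference_min_conditions:
  assumes u: "smooth_strip T u" and v: "smooth_strip T v" and t: "t \<in> tint T"
    and min: "\<And>y. \<alpha> * u z t - v z t \<le> \<alpha> * u y t - v y t"
  shows "sd \<phi> v z t = \<alpha> * sd \<phi> u z t \<and> sd \<phi> (sd \<phi> v) z t \<le> \<alpha> * sd \<phi> (sd \<phi> u) z t"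
proof -
  have dW: "((\<lambda>y. \<alpha> * u y t - v y t) has_real_derivative \<phi> y t * (\<alpha> * sd \<phi> u y t - sd \<phi> v y t)) (at y)"
    for y using DERIV_diff[OF DERIV_cmult[OF has_derivative_z(1)[OF u t]] has_derivative_z(1)[OF v t]]
    by (simp add: algebra_simps)
  have dW1: "((\<lambda>y. \<alpha> * sd \<phi> u y t - sd \<phi> v y t) has_real_derivative
      \<phi> z t * (\<alpha> * sd \<phi> (sd \<phi> u) z t - sd \<phi> (sd \<phi> v) z t)) (at z)"
    using DERIV_diff[OF DERIV_cmult[OF has_derivative_z(2)[OF u t]] has_derivative_z(2)[OF v t]]
    by (simp add: algebra_simps)
  show ?thesis
    using global_min_second_derivative_weighted[where p = "\<lambda>y. \<phi> y t",
        OF min dW dW1 has_derivative_z(1)[OF smooth(1) t] positive(1)[OF t]] by simp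
qed

lemma order_preserved:
  assumes init: "\<And>z. f z 0 \<le> g z 0" and t: "t \<in> tint T"
  shows "f z t \<le> g z t"
proof -
  define \<kappa> where "\<kappa> z t = (sd \<phi> f z t)^2 / (f z t * g z t)
    - 2 * reaction_exchange_poly (f z t) (g z t) (h z t) / ((f z t)^2 * (g z t)^2 * (h z t)^2) + 1" for z t
  have "0 \<le> g z t - f z t"
  proof (rule periodic_min_principle[where w = "\<lambda>z t. g z t - f z t" and \<kappa> = \<kappa>, OF _ _ _ _ _ t])
    show "continuous_on (UNIV \<times> tint T) (\<lambda>p. g (fst p) (snd p) - f (fst p) (snd p))"
      by (intro continuous_intros smooth_strip_continuous smooth)
    show "continuous_on (UNIV \<times> tint T) (\<lambda>p. \<kappa> (fst p) (snd p))"
      unfolding \<kappa>_def reaction_exchange_poly_def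
      by (intro continuous_intros smooth_strip_continuous smooth continuous_sd) (simp_all add: profile_nonzero)
  next
    fix z0 t0
    assume t0: "t0 \<in> tint T" "0 < t0" and min: "\<forall>y. g z0 t0 - f z0 t0 \<le> g y t0 - f y t0"
      and neg: "g z0 t0 - f z0 t0 < 0"
    have "sd \<phi> f z0 t0 = sd \<phi> g z0 t0 \<and> sd \<phi> (sd \<phi> f) z0 t0 \<le> sd \<phi> (sd \<phi> g) z0 t0"
      using difference_min_conditions[OF smooth(3) smooth(2) t0(1), of 1 z0] min by simp
    then have "\<kappa> z0 t0 * (g z0 t0 - f z0 t0) <
      (sd \<phi> (sd \<phi> g) z0 t0 + sd \<phi> g z0 t0 * (sd \<phi> f z0 t0 / f z0 t0 + sd \<phi> h z0 t0 / h z0 t0)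
        - 2 * reaction (g z0 t0) (f z0 t0) (h z0 t0))
      - (sd \<phi> (sd \<phi> f) z0 t0 + sd \<phi> f z0 t0 * (sd \<phi> g z0 t0 / g z0 t0 + sd \<phi> h z0 t0 / h z0 t0)
        - 2 * reaction (f z0 t0) (g z0 t0) (h z0 t0))"
      using order_gap_estimate[of "f z0 t0" "g z0 t0" "h z0 t0" "sd \<phi> (sd \<phi> f) z0 t0"
          "sd \<phi> (sd \<phi> g) z0 t0" "sd \<phi> f z0 t0" "sd \<phi> h z0 t0"] positive[OF t0(1)] neg
      by (simp add: \<kappa>_def)
    then show "\<exists>D. ((\<lambda>s. g z0 s - f z0 s) has_real_derivative D) (at t0) \<and> \<kappa> z0 t0 * (g z0 t0 - f z0 t0) < D"
      using DERIV_diff[OF warped_evolution_at[OF evolution(2) t0] warped_evolution_at[OF evolution(1) t0]]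
      by blast
  qed (use init periodic in auto)
  then show ?thesis by simp
qed

lemma pinching_preserved:
  assumes order: "\<And>z t. t \<in> tint T \<Longrightarrow> f z t \<le> g z t \<and> g z t \<le> h z t" and l: "1 < l"
    and init: "\<And>z. h z 0 \<le> l * f z 0" and t: "t \<in> tint T"
  shows "h z t \<le> l * f z t"
proof -
  define \<kappa> where "\<kappa> z t = l * (sd \<phi> f z t)^2 / (f z t * h z t)" for z t
  have "0 \<le> l * f z t - h z t"
  proof (rule periodic_min_principle[where w = "\<lambda>z t. l * f z t - h z t" and \<kappa> = \<kappa>, OF _ _ _ _ _ t])
    show "continuous_on (UNIV \<times> tint T) (\<lambda>p. l * f (fst p) (snd p) - h (fst p) (snd p))"
      by (intro continuous_intros smooth_strip_continuous smooth)
    show "continuous_on (UNIV \<times> tint T) (\<lambda>p. \<kappa> (fst p) (snd p))"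
      unfolding \<kappa>_def
      by (intro continuous_intros smooth_strip_continuous smooth continuous_sd) (simp add: profile_nonzero)
  next
    fix z0 t0
    assume t0: "t0 \<in> tint T" "0 < t0" and min: "\<forall>y. l * f z0 t0 - h z0 t0 \<le> l * f y t0 - h y t0"
      and neg: "l * f z0 t0 - h z0 t0 < 0"
    have "sd \<phi> h z0 t0 = l * sd \<phi> f z0 t0 \<and> sd \<phi> (sd \<phi> h) z0 t0 \<le> l * sd \<phi> (sd \<phi> f) z0 t0"
      using difference_min_conditions[OF smooth(2) smooth(4) t0(1), of l z0] min by simp
    then have "\<kappa> z0 t0 * (l * f z0 t0 - h z0 t0) <
      l * (sd \<phi> (sd \<phi> f) z0 t0 + sd \<phi> f z0 t0 * (sd \<phi> g z0 t0 / g z0 t0 + sd \<phi> h z0 t0 / h z0 t0)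
        - 2 * reaction (f z0 t0) (g z0 t0) (h z0 t0))
      - (sd \<phi> (sd \<phi> h) z0 t0 + sd \<phi> h z0 t0 * (sd \<phi> f z0 t0 / f z0 t0 + sd \<phi> g z0 t0 / g z0 t0)
        - 2 * reaction (h z0 t0) (f z0 t0) (g z0 t0))"
      using pinching_gap_estimate[of "f z0 t0" "g z0 t0" "h z0 t0" l "sd \<phi> (sd \<phi> h) z0 t0"
          "sd \<phi> (sd \<phi> f) z0 t0" "sd \<phi> f z0 t0" "sd \<phi> g z0 t0"] positive[OF t0(1)] order[OF t0(1)] l neg
      by (simp add: \<kappa>_def)
    then show "\<exists>D. ((\<lambda>s. l * f z0 s - h z0 s) has_real_derivative D) (at t0) \<and>
        \<kappa> z0 t0 * (l * f z0 t0 - h z0 t0) < D"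
      using DERIV_diff[OF DERIV_cmult[OF warped_evolution_at[OF evolution(1) t0]]
          warped_evolution_at[OF evolution(3) t0]]
      by blast
  qed (use init periodic in auto)
  then show ?thesis by simp
qed

lemma log_sd_has_derivative_z:
  assumes u: "smooth_strip T u" and t: "t \<in> tint T" and nz: "u z t \<noteq> 0"
  shows "((\<lambda>y. sd \<phi> u y t / u y t) has_real_derivative
    \<phi> z t * (sd \<phi> (sd \<phi> u) z t / u z t - (sd \<phi> u z t / u z t)^2)) (at z)"
  by (rule DERIV_cong[OF DERIV_divide[OF has_derivative_z(2,1)[OF u t] nz]])
     (simp add: nz field_simps power2_eq_square)

lemma pt_has_derivative_z_at_critical:
  assumes t: "t \<in> tint T" "0 < t" and crit: "sd \<phi> (sd \<phi> f) z t = 0"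
  shows "((\<lambda>y. pt T f y t) has_real_derivative \<phi> z t * (sd \<phi> (sd \<phi> (sd \<phi> f)) z t
    + sd \<phi> f z t * (sd \<phi> (sd \<phi> g) z t / g z t - (sd \<phi> g z t / g z t)^2
      + sd \<phi> (sd \<phi> h) z t / h z t - (sd \<phi> h z t / h z t)^2)
    - 2 * (reaction_dx (f z t) (g z t) (h z t) * sd \<phi> f z t + reaction_dy (f z t) (g z t) (h z t) * sd \<phi> g z t
      + reaction_dz (f z t) (g z t) (h z t) * sd \<phi> h z t))) (at z)"
proof -
  have nz: "f z t \<noteq> 0" "g z t \<noteq> 0" "h z t \<noteq> 0"
    using positive[OF t(1), of z] by auto
  note df = has_derivative_z[OF smooth(2) t(1)]
  note dg = has_derivative_z[OF smooth(3) t(1)]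
  note dh = has_derivative_z[OF smooth(4) t(1)]
  have evolution_rhs: "(\<lambda>y. pt T f y t) = (\<lambda>y. sd \<phi> (sd \<phi> f) y t
      + sd \<phi> f y t * (sd \<phi> g y t / g y t + sd \<phi> h y t / h y t) - 2 * reaction (f y t) (g y t) (h y t))"
    by (intro ext pt_eqI[OF t]) (simp add: at_within_tint[OF t] warped_evolution_at[OF evolution(1) t])
  show ?thesis
    by (subst evolution_rhs, rule DERIV_cong[OF DERIV_diff[OF DERIV_add[OF df(3) DERIV_mult[OF df(2)
        DERIV_add[OF log_sd_has_derivative_z[OF smooth(3) t(1) nz(2)] log_sd_has_derivative_z[OF smooth(4) t(1) nz(3)]]]]
        DERIV_cmult[OF reaction_has_derivative[OF df(1) dg(1) dh(1) nz]]]])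
       (simp add: crit algebra_simps)
qed

text \<open>At a spatial critical point of \<open>f'\<close> the arclength correction \<open>- f' \<phi>\<^sub>t / \<phi>\<close> cancels
  the second-order terms \<open>f' (g''/g + h''/h)\<close> of \<open>\<partial>\<^sub>z f\<^sub>t / \<phi>\<close>, leaving only the damping term.\<close>
lemma sd_has_derivative_t_at_critical:
  assumes t: "t \<in> tint T" "0 < t" and crit: "sd \<phi> (sd \<phi> f) z t = 0"
  shows "((\<lambda>s. sd \<phi> f z s) has_real_derivative sd \<phi> (sd \<phi> (sd \<phi> f)) z t
    - gradient_damping (f z t) (g z t) (h z t) (sd \<phi> f z t) (sd \<phi> g z t) (sd \<phi> h z t)) (at t)"
proof -
  have nz: "\<phi> z t \<noteq> 0" "f z t \<noteq> 0" "g z t \<noteq> 0" "h z t \<noteq> 0"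
    using positive[OF t(1), of z] by auto
  note d_pz = smooth_strip_pz_has_derivative_t[OF smooth(2) t pt_has_derivative_z_at_critical[OF t crit]]
  have d_\<phi>: "((\<lambda>s. \<phi> z s) has_real_derivative \<phi> z t * (sd \<phi> (sd \<phi> f) z t / f z t
      + sd \<phi> (sd \<phi> g) z t / g z t + sd \<phi> (sd \<phi> h) z t / h z t)) (at t)"
    using length_evolution[OF t(1), of z] by (simp add: at_within_tint[OF t])
  have sd_f: "(\<lambda>s. sd \<phi> f z s) = (\<lambda>s. pz f z s / \<phi> z s)"
    by (simp add: sd_def)
  show ?thesis
    by (subst sd_f, rule DERIV_cong[OF DERIV_divide[OF d_pz d_\<phi> nz(1)]])
       (use nz crit in \<open>simp add: gradient_damping_def sd_def[of \<phi> f] field_simps power2_eq_square\<close>)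
qed

section \<open>Gradient bounds\<close>

lemma sd_min_conditions:
  assumes t: "t \<in> tint T" and min: "\<And>y. \<sigma> * sd \<phi> f z t \<le> \<sigma> * sd \<phi> f y t"
  shows "\<sigma> * sd \<phi> (sd \<phi> f) z t = 0 \<and> 0 \<le> \<sigma> * sd \<phi> (sd \<phi> (sd \<phi> f)) z t"
proof -
  have dW: "((\<lambda>y. \<sigma> * sd \<phi> f y t) has_real_derivative \<phi> y t * (\<sigma> * sd \<phi> (sd \<phi> f) y t)) (at y)" for y
    using DERIV_cmult[OF has_derivative_z(2)[OF smooth(2) t]] by (simp add: algebra_simps)
  have dW1: "((\<lambda>y. \<sigma> * sd \<phi> (sd \<phi> f) y t) has_real_derivative
      \<phi> z t * (\<sigma> * sd \<phi> (sd \<phi> (sd \<phi> f)) z t)) (at z)"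
    using DERIV_cmult[OF has_derivative_z(3)[OF smooth(2) t]] by (simp add: algebra_simps)
  show ?thesis
    using global_min_second_derivative_weighted[where p = "\<lambda>y. \<phi> y t",
        OF min dW dW1 has_derivative_z(1)[OF smooth(1) t] positive(1)[OF t]] .
qed

lemma gradient_one_sided_bound:
  assumes \<sigma>: "\<sigma> = 1 \<or> \<sigma> = -1"
    and damping: "\<And>z t S p q. t \<in> tint T \<Longrightarrow> K \<le> S \<Longrightarrow>
      0 < gradient_damping (f z t) (g z t) (h z t) S p q"
    and KC: "K \<le> C" and init: "\<And>z. 0 \<le> C + \<sigma> * sd \<phi> f z 0" and t: "t \<in> tint T"
  shows "0 \<le> C + \<sigma> * sd \<phi> f z t"
proof (rule periodic_min_principle[where w = "\<lambda>z t. C + \<sigma> * sd \<phi> f z t" and \<kappa> = "\<lambda>_ _. 0", OF _ _ _ init _ t])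
  show "continuous_on (UNIV \<times> tint T) (\<lambda>p. C + \<sigma> * sd \<phi> f (fst p) (snd p))"
    by (intro continuous_intros continuous_sd smooth)
  show "C + \<sigma> * sd \<phi> f (z + 2*pi) t = C + \<sigma> * sd \<phi> f z t" if "t \<in> tint T" for z t
    using sd_periodic[of f t z] smooth(2) that periodic(1)[OF that] by simp
next
  fix z0 t0
  assume t0: "t0 \<in> tint T" "0 < t0" and min: "\<forall>y. C + \<sigma> * sd \<phi> f z0 t0 \<le> C + \<sigma> * sd \<phi> f y t0"
    and neg: "C + \<sigma> * sd \<phi> f z0 t0 < 0"
  have "\<sigma> * sd \<phi> (sd \<phi> f) z0 t0 = 0 \<and> 0 \<le> \<sigma> * sd \<phi> (sd \<phi> (sd \<phi> f)) z0 t0"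
    by (rule sd_min_conditions[OF t0(1)]) (use min in simp)
  then have crit: "sd \<phi> (sd \<phi> f) z0 t0 = 0" and third: "0 \<le> \<sigma> * sd \<phi> (sd \<phi> (sd \<phi> f)) z0 t0"
    using \<sigma> by auto
  define G where "G = gradient_damping (f z0 t0) (g z0 t0) (h z0 t0) (sd \<phi> f z0 t0) (sd \<phi> g z0 t0) (sd \<phi> h z0 t0)"
  have "K \<le> - \<sigma> * sd \<phi> f z0 t0" using neg KC by linarith
  then have "0 < gradient_damping (f z0 t0) (g z0 t0) (h z0 t0)
      (- \<sigma> * sd \<phi> f z0 t0) (- \<sigma> * sd \<phi> g z0 t0) (- \<sigma> * sd \<phi> h z0 t0)"
    by (rule damping[OF t0(1)])
  moreover have "gradient_damping (f z0 t0) (g z0 t0) (h z0 t0)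
      (- \<sigma> * sd \<phi> f z0 t0) (- \<sigma> * sd \<phi> g z0 t0) (- \<sigma> * sd \<phi> h z0 t0) = - \<sigma> * G"
    using gradient_damping_sign_flip[of "- \<sigma>"] \<sigma> by (auto simp: G_def)
  ultimately have "0 < - \<sigma> * G" by simp
  with third have "0 < \<sigma> * (sd \<phi> (sd \<phi> (sd \<phi> f)) z0 t0 - G)"
    by (simp add: algebra_simps)
  moreover have "((\<lambda>s. C + \<sigma> * sd \<phi> f z0 s) has_real_derivative \<sigma> * (sd \<phi> (sd \<phi> (sd \<phi> f)) z0 t0 - G)) (at t0)"
    using DERIV_add[OF DERIV_const DERIV_cmult[OF sd_has_derivative_t_at_critical[OF t0 crit]]]
    by (simp add: G_def)
  ultimately show "\<exists>D. ((\<lambda>s. C + \<sigma> * sd \<phi> f z0 s) has_real_derivative D) (at t0) \<and>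
      0 * (C + \<sigma> * sd \<phi> f z0 t0) < D"
    by (metis mult_zero_left)
qed (rule continuous_on_const)

lemma gradient_bound:
  assumes damping: "\<And>z t S p q. t \<in> tint T \<Longrightarrow> K \<le> S \<Longrightarrow>
      0 < gradient_damping (f z t) (g z t) (h z t) S p q"
    and t: "t \<in> tint T"
  shows "\<bar>sd \<phi> f z t\<bar> \<le> max K (SUP y\<in>{0..2*pi}. \<bar>sd \<phi> f y 0\<bar>)"
proof -
  let ?C = "max K (SUP y\<in>{0..2*pi}. \<bar>sd \<phi> f y 0\<bar>)"
  have t0: "0 \<in> tint T" by (rule zero_in_tint[OF T_pos])
  have "continuous_on {0..2*pi} (\<lambda>y. (y, 0::real))" "(\<lambda>y. (y, 0::real)) ` {0..2*pi} \<subseteq> UNIV \<times> tint T"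
    using t0 by (auto intro!: continuous_intros)
  from continuous_on_compose2[OF continuous_sd[OF smooth(2)] this]
  have "continuous_on {0..2*pi} (\<lambda>y. sd \<phi> f y 0)" by simp
  moreover have "sd \<phi> f (y + 2*pi) 0 = sd \<phi> f y 0" for y
    using sd_periodic[of f 0 y] smooth(2) t0 periodic(1)[OF t0] by simp
  ultimately have "\<bar>sd \<phi> f y 0\<bar> \<le> (SUP y\<in>{0..2*pi}. \<bar>sd \<phi> f y 0\<bar>)" for y
    by (rule abs_le_SUP_period)
  then have init: "\<bar>sd \<phi> f y 0\<bar> \<le> ?C" for y
    by (simp add: le_max_iff_disj)
  have "0 \<le> ?C + \<sigma> * sd \<phi> f z t" if \<sigma>: "\<sigma> = 1 \<or> \<sigma> = -1" for \<sigma>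
  proof (rule gradient_one_sided_bound[where K = K, OF \<sigma> damping _ _ t])
    show "0 \<le> ?C + \<sigma> * sd \<phi> f y 0" for y
      using init[of y] \<sigma> by (auto simp: abs_le_iff)
  qed (assumption | rule max.cobounded1)+
  from this[of 1] this[of "-1"] show ?thesis
    by (simp add: abs_le_iff)
qed

lemma gradient_bound_of_damping_weight:
  assumes weight: "\<And>z t. t \<in> tint T \<Longrightarrow> damping_weight (f z t) (g z t) (h z t) \<le> 580"
    and t: "t \<in> tint T"
  shows "\<bar>sd \<phi> f z t\<bar> \<le> max 10 (SUP y\<in>{0..2*pi}. \<bar>sd \<phi> f y 0\<bar>)"
proof (rule gradient_bound[OF _ t])
  fix z t S p q assume t: "t \<in> tint T" and S: "10 \<le> (S::real)"
  have "10^2 \<le> S^2" using S by (intro power_mono) auto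
  then have "damping_weight (f z t) (g z t) (h z t) < 6 * S^2"
    using weight[OF t, of z] by simp
  then show "0 < gradient_damping (f z t) (g z t) (h z t) S p q"
    using gradient_damping_pos positive[OF t] S by simp
qed

lemma pinching_preserved_all:
  assumes init: "\<And>z. f z 0 \<le> g z 0 \<and> g z 0 \<le> h z 0 \<and> h z 0 \<le> l * f z 0" and l: "1 < l"
    and t: "t \<in> tint T"
  shows "f z t \<le> g z t \<and> g z t \<le> h z t \<and> h z t \<le> l * f z t"
proof -
  have ghf: "warped_ricci_flow T \<phi> g h f"
    by (rule warped_ricci_flow_swap23[OF warped_ricci_flow_swap12[OF warped_ricci_flow_axioms]])
  have order: "f z t \<le> g z t \<and> g z t \<le> h z t" if "t \<in> tint T" for z t
  proof
    show "f z t \<le> g z t"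
      by (rule order_preserved[OF init[THEN conjunct1] that])
    show "g z t \<le> h z t"
      by (rule warped_ricci_flow.order_preserved[OF ghf init[THEN conjunct2, THEN conjunct1] that])
  qed
  have "h z t \<le> l * f z t"
    by (rule pinching_preserved[OF order l init[THEN conjunct2, THEN conjunct2] t])
  with order[OF t] show ?thesis by simp
qed

end

lemma pinched_gradient_bounds:
  assumes abc: "warped_ricci_flow T \<phi> a b c" and l: "1 < l" "l < 2"
    and init: "\<And>z. a z 0 \<le> b z 0 \<and> b z 0 \<le> c z 0 \<and> c z 0 \<le> l * a z 0" and t: "t \<in> tint T"
  shows "\<bar>sd \<phi> a z t\<bar> \<le> max 10 (SUP y\<in>{0..2*pi}. \<bar>sd \<phi> a y 0\<bar>)"
    and "\<bar>sd \<phi> b z t\<bar> \<le> max 10 (SUP y\<in>{0..2*pi}. \<bar>sd \<phi> b y 0\<bar>)"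
    and "\<bar>sd \<phi> c z t\<bar> \<le> max 10 (SUP y\<in>{0..2*pi}. \<bar>sd \<phi> c y 0\<bar>)"
proof -
  have pinched: "0 < a z t \<and> a z t \<le> b z t \<and> b z t \<le> c z t \<and> c z t \<le> 2 * a z t"
    if "t \<in> tint T" for z t
  proof -
    have "a z t \<le> b z t \<and> b z t \<le> c z t \<and> c z t \<le> l * a z t"
      using warped_ricci_flow.pinching_preserved_all[OF abc init l(1) that] .
    moreover have "0 < a z t" by (rule warped_ricci_flow.positive(2)[OF abc that])
    moreover have "l * a z t \<le> 2 * a z t" using l(2) \<open>0 < a z t\<close> by simp
    ultimately show ?thesis by linarith
  qed
  show "\<bar>sd \<phi> a z t\<bar> \<le> max 10 (SUP y\<in>{0..2*pi}. \<bar>sd \<phi> a y 0\<bar>)"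
    by (rule warped_ricci_flow.gradient_bound_of_damping_weight[OF abc _ t])
       (use pinched in \<open>auto intro: damping_weight_smallest\<close>)
  show "\<bar>sd \<phi> b z t\<bar> \<le> max 10 (SUP y\<in>{0..2*pi}. \<bar>sd \<phi> b y 0\<bar>)"
    by (rule warped_ricci_flow.gradient_bound_of_damping_weight[OF warped_ricci_flow_swap12[OF abc] _ t])
       (use pinched in \<open>auto intro: damping_weight_middle\<close>)
  show "\<bar>sd \<phi> c z t\<bar> \<le> max 10 (SUP y\<in>{0..2*pi}. \<bar>sd \<phi> c y 0\<bar>)"
    by (rule warped_ricci_flow.gradient_bound_of_damping_weight[OF
          warped_ricci_flow_swap12[OF warped_ricci_flow_swap23[OF abc]] _ t])
       (use pinched in \<open>auto intro: order.trans[OF damping_weight_largest]\<close>)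
qed

lemma ten_le_gradient_constants:
  "10 \<le> 280 * sqrt 3 / (9::real)" "10 \<le> 4 * sqrt 57 / (3::real)" "10 \<le> 10 * sqrt 93 / (9::real)"
proof -
  have "1 \<le> sqrt (3::real)" by simp
  then show "10 \<le> 280 * sqrt 3 / (9::real)" by linarith
  have "15/2 \<le> sqrt (57::real)" by (rule real_le_rsqrt) (simp add: power2_eq_square)
  then show "10 \<le> 4 * sqrt 57 / (3::real)" by simp
  have "9 \<le> sqrt (93::real)" by (rule real_le_rsqrt) (simp add: power2_eq_square)
  then show "10 \<le> 10 * sqrt 93 / (9::real)" by simp
qed

theorem lemma4p7:
  fixes \<phi> a b c :: "real \<Rightarrow> real \<Rightarrow> real" and T :: ereal and lam :: real
  assumes "rf_maximal T \<phi> a b c"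
    and "1 < lam" and "lam < 2"
    and "\<forall>z. a z 0 \<le> b z 0 \<and> b z 0 \<le> c z 0 \<and> c z 0 \<le> lam * a z 0"
  shows "\<exists>C1 C2 C3. C1 > 0 \<and> C2 > 0 \<and> C3 > 0 \<and>
    (\<forall>z. \<forall>t\<in>tint T. \<bar>sd \<phi> a z t\<bar> \<le> C1 \<and> \<bar>sd \<phi> b z t\<bar> \<le> C2 \<and> \<bar>sd \<phi> c z t\<bar> \<le> C3) \<and>
    C1 \<le> max (280 * sqrt 3 / 9) (SUP z\<in>{0..2*pi}. \<bar>sd \<phi> a z 0\<bar>) \<and>
    C2 \<le> max (4 * sqrt 57 / 3) (SUP z\<in>{0..2*pi}. \<bar>sd \<phi> b z 0\<bar>) \<and>
    C3 \<le> max (10 * sqrt 93 / 9) (SUP z\<in>{0..2*pi}. \<bar>sd \<phi> c z 0\<bar>)"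
proof -
  have flow: "warped_ricci_flow T \<phi> a b c"
    using assms(1) by (simp add: rf_maximal_def rf_solution_warped_ricci_flow)
  define bound where "bound u = max 10 (SUP y\<in>{0..2*pi}. \<bar>sd \<phi> u y 0\<bar>)" for u
  have "\<forall>z. \<forall>t\<in>tint T. \<bar>sd \<phi> a z t\<bar> \<le> bound a \<and> \<bar>sd \<phi> b z t\<bar> \<le> bound b \<and> \<bar>sd \<phi> c z t\<bar> \<le> bound c"
    using pinched_gradient_bounds[OF flow assms(2,3)] assms(4) by (simp add: bound_def)
  moreover have "0 < bound u" for u
    by (simp add: bound_def less_max_iff_disj)
  moreover have "bound u \<le> max C (SUP y\<in>{0..2*pi}. \<bar>sd \<phi> u y 0\<bar>)" if "10 \<le> C" for C u
    unfolding bound_def using that by (rule max.mono) simp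
  ultimately show ?thesis
    using ten_le_gradient_constants by blast
qed

end
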